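(* Let $A=(A,m_A,\mu_A,\Delta_A,\varepsilon_A)$ be a commutative bialgebra and let $\text{Ш}_e(A)=(\text{Ш}_e(A),\diamond,P_e,j_A)$ be the free commutative extended Rota-Baxter algebra of weight $(\lambda,\kappa)$ on $A$. Let $\mu\in\mathbf{k}$ be a root of $t^2-\lambda t+\kappa$. Then there exists a unique homomorphism $\varepsilon_e:\text{Ш}_e(A)\to\mathbf{k}$ of extended Rota-Baxter algebras of weight $(\lambda,\kappa)$ (where $\mathbf{k}$ carries the operator $-\mu\,\mathrm{id}$) such that $$\varepsilon_e\circ j_A=\varepsilon_A\quad\text{and}\quad \varepsilon_e\circ P_e=-\mu\,\mathrm{id}\circ\varepsilon_e.$$
   Context: $\mathbf{k}$ is a commutative unitary ring. An extended Rota-Baxter operator of weight $(\lambda,\kappa)$ on an algebra $R$ is a linear $P:R\to R$ with $P(x)P(y)=P(xP(y))+P(P(x)y)+\lambda P(xy)+\kappa xy$. $\text{Ш}_e(A)=\bigoplus_{n\ge1}A^{\otimes n}$, $P_e(\mathfrak{a})=1_A\otimes\mathfrak{a}$, $j_A:A\to\text{Ш}_e(A)$ the inclusion $A=A^{\otimes1}$, and $\diamond$ the product defined recursively on pure tensors $\mathfrak{a}=a_0\otimes\mathfrak{a}'\in A^{\otimes(m+1)}$, $\mathfrak{b}=b_0\otimes\mathfrak{b}'\in A^{\otimes(n+1)}$ by $a_0b_0$ ($m=n=0$), $a_0b_0\otimes\mathfrak{b}'$ ($m=0,n\ge1$), $a_0b_0\otimes\mathfrak{a}'$ ($m\ge1,n=0$),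 and $a_0b_0\otimes(\mathfrak{a}'\diamond(1_A\otimes\mathfrak{b}')+(1_A\otimes\mathfrak{a}')\diamond\mathfrak{b}'+\lambda\mathfrak{a}'\diamond\mathfrak{b}')+\kappa a_0b_0(\mathfrak{a}'\diamond\mathfrak{b}')$ ($m,n\ge1$). It is the free commutative extended Rota-Baxter algebra of weight $(\lambda,\kappa)$ on $A$ (universal property with respect to algebra homomorphisms from $A$). $-\mu\,\mathrm{id}$ is an extended Rota-Baxter operator of weight $(\lambda,\kappa)$ on $\mathbf{k}$ since $\mu^2-\lambda\mu+\kappa=0$. *)

theory Defs
  imports Main "HOL-Library.Poly_Mapping" "HOL-Library.FuncSet"
begin

text \<open>
The commutative
k-algebra A is a type 'a of class comm_ring_1 together with a scalar action
sc :: 'k => 'a => 'a.  Tensor powers over k are built literally: the free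
k-module on words (lists) of elements of A, i.e. 'a list =>0 'k, modulo the
k-submodule N generated by the multilinearity relations in each slot.  A word of
length n stands for the pure tensor a1 (x) ... (x) an.  Sha_e(A) is the set of
cosets of elements not involving the empty word (i.e. the direct sum of
A^{(x)n}, n >= 1).
\<close>

type_synonym ('a,'k) fmod = "'a list \<Rightarrow>\<^sub>0 'k"

definition smul :: "'k::comm_ring_1 \<Rightarrow> ('a,'k) fmod \<Rightarrow> ('a,'k) fmod" where
  "smul c x = Poly_Mapping.map (\<lambda>v. c * v) x"

definition linext :: "('a list \<Rightarrow> ('b,'k::comm_ring_1) fmod) \<Rightarrow> ('a,'k) fmod \<Rightarrow> ('b,'k) fmod" where
  "linext f x = (\<Sum>w\<in>Poly_Mapping.keys x. smul (Poly_Mapping.lookup x w) (f w))"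

definition wd :: "'a list \<Rightarrow> ('a,'k::comm_ring_1) fmod" where
  "wd w = Poly_Mapping.single w 1"

inductive_set tens_rel :: "('k::comm_ring_1 \<Rightarrow> 'a::comm_ring_1 \<Rightarrow> 'a) \<Rightarrow> ('a,'k) fmod set"
  for sc where
  gen_add: "wd (u @ (a + b) # v) - wd (u @ a # v) - wd (u @ b # v) \<in> tens_rel sc"
| gen_sc: "wd (u @ sc c a # v) - smul c (wd (u @ a # v)) \<in> tens_rel sc"
| zero: "0 \<in> tens_rel sc"
| add: "x \<in> tens_rel sc \<Longrightarrow> y \<in> tens_rel sc \<Longrightarrow> x + y \<in> tens_rel sc"
| scal: "x \<in> tens_rel sc \<Longrightarrow> smul c x \<in> tens_rel sc"

definition comm_kalg :: "('k::comm_ring_1 \<Rightarrow> 'a::comm_ring_1 \<Rightarrow> 'a) \<Rightarrow> bool" where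
  "comm_kalg sc \<longleftrightarrow>
     (\<forall>c a b. sc c (a + b) = sc c a + sc c b) \<and>
     (\<forall>c d a. sc (c + d) a = sc c a + sc d a) \<and>
     (\<forall>c d a. sc (c * d) a = sc c (sc d a)) \<and>
     (\<forall>a. sc 1 a = a) \<and>
     (\<forall>c a b. sc c (a * b) = sc c a * b)"

text \<open>Structure maps of A (x) A and A (x) A (x) A, computed on representatives
 (A (x) A = words of length 2 modulo tens_rel).\<close>
definition tmul2 :: "('a::comm_ring_1,'k::comm_ring_1) fmod \<Rightarrow> ('a,'k) fmod \<Rightarrow> ('a,'k) fmod" where
  "tmul2 x y = linext (\<lambda>u. linext (\<lambda>v. wd (map2 (*) u v)) y) x"

definition comm_bialgebra ::
  "('k::comm_ring_1 \<Rightarrow> 'a::comm_ring_1 \<Rightarrow> 'a) \<Rightarrow> ('a \<Rightarrow> ('a,'k) fmod) \<Rightarrow> ('a \<Rightarrow> 'k) \<Rightarrow> bool" where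
  "comm_bialgebra sc \<Delta> eps \<longleftrightarrow>
     comm_kalg sc \<and>
     \<comment> \<open>coproduct lands in A (x) A and is a k-algebra map\<close>
     (\<forall>a. \<forall>w\<in>Poly_Mapping.keys (\<Delta> a). length w = 2) \<and>
     (\<forall>a b. \<Delta> (a + b) - (\<Delta> a + \<Delta> b) \<in> tens_rel sc) \<and>
     (\<forall>c a. \<Delta> (sc c a) - smul c (\<Delta> a) \<in> tens_rel sc) \<and>
     (\<forall>a b. \<Delta> (a * b) - tmul2 (\<Delta> a) (\<Delta> b) \<in> tens_rel sc) \<and>
     \<Delta> 1 - wd [1, 1] \<in> tens_rel sc \<and>
     \<comment> \<open>coassociativity\<close>
     (\<forall>a. linext (\<lambda>w. linext (\<lambda>u. wd (u @ [w ! 1])) (\<Delta> (w ! 0))) (\<Delta> a)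
          - linext (\<lambda>w. linext (\<lambda>u. wd (w ! 0 # u)) (\<Delta> (w ! 1))) (\<Delta> a) \<in> tens_rel sc) \<and>
     \<comment> \<open>counit laws\<close>
     (\<forall>a. (\<Sum>w\<in>Poly_Mapping.keys (\<Delta> a). sc (Poly_Mapping.lookup (\<Delta> a) w) (sc (eps (w ! 0)) (w ! 1))) = a) \<and>
     (\<forall>a. (\<Sum>w\<in>Poly_Mapping.keys (\<Delta> a). sc (Poly_Mapping.lookup (\<Delta> a) w) (sc (eps (w ! 1)) (w ! 0))) = a) \<and>
     \<comment> \<open>counit is a k-algebra map\<close>
     (\<forall>a b. eps (a + b) = eps a + eps b) \<and>
     (\<forall>c a. eps (sc c a) = c * eps a) \<and>
     (\<forall>a b. eps (a * b) = eps a * eps b) \<and>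
     eps 1 = 1"

text \<open>a (x) X and a * X (multiplication into the first tensor factor), linearly extended\<close>
definition prep :: "'a \<Rightarrow> ('a,'k::comm_ring_1) fmod \<Rightarrow> ('a,'k) fmod" where
  "prep a x = linext (\<lambda>w. wd (a # w)) x"

definition mulhd :: "'a::comm_ring_1 \<Rightarrow> ('a,'k::comm_ring_1) fmod \<Rightarrow> ('a,'k) fmod" where
  "mulhd a x = linext (\<lambda>w. case w of [] \<Rightarrow> 0 | y # ys \<Rightarrow> wd ((a * y) # ys)) x"

fun dia :: "'k::comm_ring_1 \<Rightarrow> 'k \<Rightarrow> 'a::comm_ring_1 list \<Rightarrow> 'a list \<Rightarrow> ('a,'k) fmod" where
  "dia l k [] v = 0"
| "dia l k u [] = 0"
| "dia l k [a] (b # bs) = wd ((a * b) # bs)"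
| "dia l k (a # a1 # as) [b] = wd ((a * b) # a1 # as)"
| "dia l k (a # a1 # as) (b # b1 # bs) =
     prep (a * b) (dia l k (a1 # as) (1 # b1 # bs) + dia l k (1 # a1 # as) (b1 # bs)
                   + smul l (dia l k (a1 # as) (b1 # bs)))
     + smul k (mulhd (a * b) (dia l k (a1 # as) (b1 # bs)))"

definition dmd :: "'k::comm_ring_1 \<Rightarrow> 'k \<Rightarrow> ('a::comm_ring_1,'k) fmod \<Rightarrow> ('a,'k) fmod \<Rightarrow> ('a,'k) fmod" where
  "dmd l k x y = linext (\<lambda>u. linext (\<lambda>v. dia l k u v) y) x"

definition cls :: "('k::comm_ring_1 \<Rightarrow> 'a::comm_ring_1 \<Rightarrow> 'a) \<Rightarrow> ('a,'k) fmod \<Rightarrow> ('a,'k) fmod set" where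
  "cls sc x = {y. y - x \<in> tens_rel sc}"

definition rep :: "('a,'k::comm_ring_1) fmod set \<Rightarrow> ('a,'k) fmod" where
  "rep X = (SOME x. x \<in> X)"

definition Sha :: "('k::comm_ring_1 \<Rightarrow> 'a::comm_ring_1 \<Rightarrow> 'a) \<Rightarrow> ('a,'k) fmod set set" where
  "Sha sc = cls sc ` {x. [] \<notin> Poly_Mapping.keys x}"

definition Sha_add where "Sha_add sc X Y = cls sc (rep X + rep Y)"
definition Sha_smul where "Sha_smul sc c X = cls sc (smul c (rep X))"
definition Sha_mul where "Sha_mul sc l k X Y = cls sc (dmd l k (rep X) (rep Y))"
definition Sha_P where "Sha_P sc X = cls sc (prep 1 (rep X))"
definition Sha_j where "Sha_j sc a = cls sc (wd [a])"

text \<open>Homomorphisms of extended Rota-Baxter algebras Sha_e(A) -> k,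
  where k carries the operator Q (for us Q = -mu id).\<close>
definition Sha_ERB_hom ::
  "('k::comm_ring_1 \<Rightarrow> 'a::comm_ring_1 \<Rightarrow> 'a) \<Rightarrow> 'k \<Rightarrow> 'k \<Rightarrow> ('k \<Rightarrow> 'k)
     \<Rightarrow> (('a,'k) fmod set \<Rightarrow> 'k) \<Rightarrow> bool" where
  "Sha_ERB_hom sc l k Q f \<longleftrightarrow>
     f \<in> extensional (Sha sc) \<and>
     (\<forall>X\<in>Sha sc. \<forall>Y\<in>Sha sc. f (Sha_add sc X Y) = f X + f Y) \<and>
     (\<forall>c. \<forall>X\<in>Sha sc. f (Sha_smul sc c X) = c * f X) \<and>
     (\<forall>X\<in>Sha sc. \<forall>Y\<in>Sha sc. f (Sha_mul sc l k X Y) = f X * f Y) \<and>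
     f (Sha_j sc 1) = 1 \<and>
     (\<forall>X\<in>Sha sc. f (Sha_P sc X) = Q (f X))"

end

theory Submission
  imports Defs
begin

text \<open>
  Since \<open>a\<^sub>0 \<otimes> a' = j(a\<^sub>0) \<diamond> P\<^sub>e(a')\<close>, a homomorphism with the required properties must send
  a pure tensor \<open>a\<^sub>0 \<otimes> \<dots> \<otimes> a\<^sub>n\<close> to \<open>\<epsilon>(a\<^sub>0) \<cdots> \<epsilon>(a\<^sub>n) (-\<mu>)\<^sup>n\<close>; this gives uniqueness.
  Conversely, this formula is multilinear, so it defines a linear form \<open>\<epsilon>\<^sub>e\<close> on \<open>Sha\<^sub>e(A)\<close>,
  compatible with \<open>P\<^sub>e\<close>. It is multiplicative by induction along the recursion defining
  \<open>\<diamond>\<close>: in the recursive case the three \<open>P\<^sub>e\<close>-terms contribute \<open>-\<mu>(-2\<mu> + \<lambda>)\<close> and the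
  \<open>\<kappa>\<close>-term contributes \<open>\<kappa>\<close> times \<open>\<epsilon>(a\<^sub>0b\<^sub>0) \<epsilon>\<^sub>e(a') \<epsilon>\<^sub>e(b')\<close>, whereas the product of the
  two factors is \<open>\<mu>\<^sup>2\<close> times it; the two agree because \<open>\<mu>\<^sup>2 - \<lambda>\<mu> + \<kappa> = 0\<close>.

  Since \<open>\<diamond>\<close> is computed on representatives, existence needs no compatibility of \<open>\<diamond>\<close> with
  the tensor relations, and uniqueness only needs it in the left argument (for \<open>j(a) \<diamond> -\<close>).
\<close>

section \<open>Linear extensions on the free module over words\<close>

lemma lookup_smul [simp]: "Poly_Mapping.lookup (smul c x) w = c * Poly_Mapping.lookup x w"
  unfolding smul_def by (simp add: Poly_Mapping.map.rep_eq when_def)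

lemma smul_add_right: "smul c (x + y) = smul c x + smul c y"
  by (rule poly_mapping_eqI) (simp add: lookup_add algebra_simps)

lemma smul_add_left: "smul (c + d) x = smul c x + smul d x"
  by (rule poly_mapping_eqI) (simp add: lookup_add algebra_simps)

lemma smul_diff_right: "smul c (x - y) = smul c x - smul c y"
  by (rule poly_mapping_eqI) (simp add: lookup_minus algebra_simps)

lemma smul_smul: "smul c (smul d x) = smul (c * d) x"
  by (rule poly_mapping_eqI) (simp add: algebra_simps)

lemma smul_one [simp]: "smul 1 x = x"
  by (rule poly_mapping_eqI) simp

lemma smul_zero_left [simp]: "smul 0 x = 0"
  by (rule poly_mapping_eqI) simp

lemma smul_zero_right [simp]: "smul c 0 = 0"
  by (rule poly_mapping_eqI) simp

lemma smul_minus_one: "smul (-1) x = - x"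
  by (rule poly_mapping_eqI) simp

lemma smul_sum_right: "smul c (sum f S) = (\<Sum>i\<in>S. smul c (f i))"
  by (induction S rule: infinite_finite_induct) (auto simp: smul_add_right)

lemma lookup_wd: "Poly_Mapping.lookup (wd w) v = (if w = v then 1 else 0)"
  unfolding wd_def by (simp add: lookup_single when_def)

lemma fmod_expansion: "x = (\<Sum>w\<in>Poly_Mapping.keys x. smul (Poly_Mapping.lookup x w) (wd w))"
  by (rule poly_mapping_eqI) (simp add: lookup_sum lookup_wd if_distrib sum.delta' in_keys_iff cong: if_cong)

lemma sum_keys_smul:
  assumes "\<And>w. h w 0 = 0"
  shows "(\<Sum>w\<in>Poly_Mapping.keys (smul c x). h w (Poly_Mapping.lookup (smul c x) w))
       = (\<Sum>w\<in>Poly_Mapping.keys x. h w (c * Poly_Mapping.lookup x w))"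
  unfolding lookup_smul by (rule sum.mono_neutral_left) (auto simp: in_keys_iff assms)

lemma linext_add: "linext f (x + y) = linext f x + linext f y"
  unfolding linext_def by (rule setsum_keys_plus_distrib) (simp_all add: smul_add_left)

lemma linext_smul: "linext f (smul c x) = smul c (linext f x)"
  unfolding linext_def by (subst sum_keys_smul) (auto simp: smul_sum_right smul_smul)

lemma linext_zero [simp]: "linext f 0 = 0"
  unfolding linext_def by simp

lemma linext_uminus: "linext f (- x) = - linext f x"
  by (metis linext_smul smul_minus_one)

lemma linext_diff: "linext f (x - y) = linext f x - linext f y"
  by (metis diff_conv_add_uminus linext_add linext_uminus)

lemma linext_wd [simp]: "linext f (wd w) = f w"
  unfolding linext_def wd_def by simp

lemma linext_sum: "linext f (sum g S) = (\<Sum>i\<in>S. linext f (g i))"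
  by (induction S rule: infinite_finite_induct) (auto simp: linext_add)

lemma linext_linext: "linext g (linext f x) = linext (\<lambda>w. linext g (f w)) x"
  by (simp only: linext_def[of f x] linext_def[of "\<lambda>w. linext g (f w)" x] linext_sum linext_smul)

lemma linext_diff_fun: "linext (\<lambda>w. f w - g w) x = linext f x - linext g x"
  unfolding linext_def by (simp add: smul_diff_right sum_subtractf)

lemma linext_smul_fun: "linext (\<lambda>w. smul c (f w)) x = smul c (linext f x)"
  unfolding linext_def by (simp add: smul_sum_right smul_smul mult.commute)

definition linform :: "('a list \<Rightarrow> 'k::comm_ring_1) \<Rightarrow> ('a,'k) fmod \<Rightarrow> 'k" where
  "linform g x = (\<Sum>w\<in>Poly_Mapping.keys x. Poly_Mapping.lookup x w * g w)"

lemma linform_add: "linform g (x + y) = linform g x + linform g y"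
  unfolding linform_def by (rule setsum_keys_plus_distrib) (simp_all add: algebra_simps)

lemma linform_smul: "linform g (smul c x) = c * linform g x"
  unfolding linform_def
  by (subst sum_keys_smul[where h = "\<lambda>w a. a * g w"]) (auto simp: sum_distrib_left mult.assoc)

lemma linform_zero [simp]: "linform g 0 = 0"
  unfolding linform_def by simp

lemma linform_diff: "linform g (x - y) = linform g x - linform g y"
  by (metis diff_conv_add_uminus linform_add linform_smul smul_minus_one mult_minus1)

lemma linform_zero_fun [simp]: "linform (\<lambda>w. 0) x = 0"
  unfolding linform_def by simp

lemma linform_wd [simp]: "linform g (wd w) = g w"
  unfolding linform_def wd_def by simp

lemma linform_sum: "linform g (sum f S) = (\<Sum>i\<in>S. linform g (f i))"
  by (induction S rule: infinite_finite_induct) (auto simp: linform_add)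

lemma linform_linext: "linform g (linext f x) = linform (\<lambda>w. linform g (f w)) x"
  unfolding linext_def linform_def[of "\<lambda>w. linform g (f w)"] by (simp add: linform_sum linform_smul)

lemma linform_cong:
  "(\<And>w. w \<in> Poly_Mapping.keys x \<Longrightarrow> g w = h w) \<Longrightarrow> linform g x = linform h x"
  unfolding linform_def by simp

lemma linform_mult_left: "linform (\<lambda>w. c * g w) x = c * linform g x"
  unfolding linform_def by (simp add: sum_distrib_left mult.left_commute)

lemma linform_mult_right: "linform (\<lambda>w. g w * c) x = linform g x * c"
  unfolding linform_def by (simp add: sum_distrib_right mult.assoc)

lemma lookup_linext: "Poly_Mapping.lookup (linext f x) v = linform (\<lambda>w. Poly_Mapping.lookup (f w) v) x"
  unfolding linext_def linform_def by (simp add: lookup_sum)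

lemma tens_rel_uminus: "x \<in> tens_rel sc \<Longrightarrow> - x \<in> tens_rel sc"
  by (metis smul_minus_one tens_rel.scal)

lemma tens_rel_diff: "x \<in> tens_rel sc \<Longrightarrow> y \<in> tens_rel sc \<Longrightarrow> x - y \<in> tens_rel sc"
  by (metis tens_rel_uminus diff_conv_add_uminus tens_rel.add)

lemma tens_rel_sum: "(\<And>i. i \<in> S \<Longrightarrow> f i \<in> tens_rel sc) \<Longrightarrow> sum f S \<in> tens_rel sc"
  by (induction S rule: infinite_finite_induct) (auto intro: tens_rel.intros)

lemma linext_in_tens_rel: "(\<And>w. f w \<in> tens_rel sc) \<Longrightarrow> linext f x \<in> tens_rel sc"
  unfolding linext_def by (rule tens_rel_sum) (auto intro: tens_rel.intros)

definition respects_tens_rel ::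
  "('k::comm_ring_1 \<Rightarrow> 'a::comm_ring_1 \<Rightarrow> 'a) \<Rightarrow> ('a list \<Rightarrow> ('a,'k) fmod) \<Rightarrow> bool" where
  "respects_tens_rel sc F \<longleftrightarrow>
     (\<forall>u a b v. F (u @ (a + b) # v) - F (u @ a # v) - F (u @ b # v) \<in> tens_rel sc) \<and>
     (\<forall>u c a v. F (u @ sc c a # v) - smul c (F (u @ a # v)) \<in> tens_rel sc)"

lemma linext_tens_rel:
  assumes "respects_tens_rel sc F" and "r \<in> tens_rel sc"
  shows "linext F r \<in> tens_rel sc"
  using assms(2)
proof induction
  case (gen_add u a b v)
  then show ?case using assms(1) by (simp add: respects_tens_rel_def linext_diff)
next
  case (gen_sc u c a v)
  then show ?case using assms(1) by (simp add: respects_tens_rel_def linext_diff linext_smul)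
qed (auto simp: linext_add linext_smul intro: tens_rel.intros)

lemma lookup_Nil_tens_rel: "r \<in> tens_rel sc \<Longrightarrow> Poly_Mapping.lookup r [] = 0"
  by (induction rule: tens_rel.induct) (auto simp: lookup_minus lookup_add lookup_wd)

lemma linform_tens_rel:
  assumes "\<And>u a b v. g (u @ (a + b) # v) = g (u @ a # v) + g (u @ b # v)"
    and "\<And>u c a v. g (u @ sc c a # v) = c * g (u @ a # v)"
    and "r \<in> tens_rel sc"
  shows "linform g r = 0"
  using assms(3) by induction (auto simp: linform_diff linform_add linform_smul assms(1,2))

section \<open>The product on words respects the relations in its left argument\<close>

lemma comm_kalg_mult_scale_left: "comm_kalg sc \<Longrightarrow> d * sc c a = sc c (d * a)"
  unfolding comm_kalg_def by (metis mult.commute)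

lemma comm_kalg_mult_scale_right: "comm_kalg sc \<Longrightarrow> sc c a * d = sc c (a * d)"
  unfolding comm_kalg_def by metis

lemma prep_wd [simp]: "prep c (wd w) = wd (c # w)"
  unfolding prep_def by simp

lemma mulhd_wd_Cons [simp]: "mulhd c (wd (y # w)) = wd (c * y # w)"
  unfolding mulhd_def by simp

lemma lookup_prep_Nil [simp]: "Poly_Mapping.lookup (prep c x) [] = 0"
  unfolding prep_def lookup_linext by (simp add: lookup_wd)

lemma lookup_mulhd_Nil [simp]: "Poly_Mapping.lookup (mulhd c x) [] = 0"
proof -
  have zero: "(\<lambda>w. Poly_Mapping.lookup (case w of [] \<Rightarrow> 0 | y # ys \<Rightarrow> wd (c * y # ys)) []) = (\<lambda>w. 0)"
    by (auto simp: lookup_wd split: list.split)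
  show ?thesis unfolding mulhd_def lookup_linext zero by simp
qed

lemma prep_tens_rel: "r \<in> tens_rel sc \<Longrightarrow> prep c r \<in> tens_rel sc"
  unfolding prep_def
  by (rule linext_tens_rel) (auto simp: respects_tens_rel_def
      intro: tens_rel.gen_add[where u = "c # u" for u, simplified]
             tens_rel.gen_sc[where u = "c # u" for u, simplified])

lemma mulhd_tens_rel:
  assumes kalg: "comm_kalg sc" and r: "r \<in> tens_rel sc"
  shows "mulhd c r \<in> tens_rel sc"
  unfolding mulhd_def
proof (rule linext_tens_rel[OF _ r], unfold respects_tens_rel_def, intro conjI allI)
  fix u a b v
  show "(case u @ (a + b) # v of [] \<Rightarrow> 0 | y # ys \<Rightarrow> wd (c * y # ys))
      - (case u @ a # v of [] \<Rightarrow> 0 | y # ys \<Rightarrow> wd (c * y # ys))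
      - (case u @ b # v of [] \<Rightarrow> 0 | y # ys \<Rightarrow> wd (c * y # ys)) \<in> tens_rel sc"
    using tens_rel.gen_add[where sc = sc and u = "[]" and a = "c * a" and b = "c * b" and v = v]
      tens_rel.gen_add[where sc = sc and u = "c * hd u # tl u" and a = a and b = b and v = v]
    by (cases u) (simp_all add: distrib_left)
next
  fix u d a v
  show "(case u @ sc d a # v of [] \<Rightarrow> 0 | y # ys \<Rightarrow> wd (c * y # ys))
      - smul d (case u @ a # v of [] \<Rightarrow> 0 | y # ys \<Rightarrow> wd (c * y # ys)) \<in> tens_rel sc"
    using tens_rel.gen_sc[where sc = sc and u = "[]" and c = d and a = "c * a" and v = v]
      tens_rel.gen_sc[where sc = sc and u = "c * hd u # tl u" and c = d and a = a and v = v]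
    by (cases u) (simp_all add: comm_kalg_mult_scale_left[OF kalg])
qed

lemma mulhd_head_add: "mulhd (a + b) x - mulhd a x - mulhd b x \<in> tens_rel sc"
  unfolding mulhd_def linext_diff_fun[symmetric]
  by (rule linext_in_tens_rel)
    (auto split: list.split intro: tens_rel.zero tens_rel.gen_add[where u = "[]", simplified]
      simp: distrib_right)

lemma mulhd_head_scale:
  "comm_kalg sc \<Longrightarrow> mulhd (sc c a) x - smul c (mulhd a x) \<in> tens_rel sc"
  unfolding mulhd_def linext_smul_fun[symmetric] linext_diff_fun[symmetric]
  by (rule linext_in_tens_rel)
    (auto split: list.split intro: tens_rel.zero tens_rel.gen_sc[where u = "[]", simplified]
      simp: comm_kalg_mult_scale_right)

lemma mulhd_diff: "mulhd a (x - y) = mulhd a x - mulhd a y"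
  unfolding mulhd_def by (rule linext_diff)

lemma mulhd_prep: "mulhd a (prep b x) = prep (a * b) x"
  unfolding prep_def mulhd_def linext_linext by simp

lemma mulhd_mulhd: "mulhd a (mulhd b x) = mulhd (a * b) x"
  unfolding mulhd_def linext_linext
  by (rule arg_cong[where f = "\<lambda>f. linext f x"]) (auto split: list.split simp: mult.assoc)

definition dia_step ::
  "'k::comm_ring_1 \<Rightarrow> 'k \<Rightarrow> 'a::comm_ring_1 \<Rightarrow>
     ('a,'k) fmod \<Rightarrow> ('a,'k) fmod \<Rightarrow> ('a,'k) fmod \<Rightarrow> ('a,'k) fmod"
  where "dia_step l k c X Y Z = prep c (X + Y + smul l Z) + smul k (mulhd c Z)"

lemma dia_Nil_right [simp]: "dia l k u [] = 0"
  by (cases u) auto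

lemma dia_Cons_single [simp]: "dia l k (a # A) [b] = wd (a * b # A)"
  by (cases A) auto

lemma dia_Cons_Cons:
  "A \<noteq> [] \<Longrightarrow> B \<noteq> [] \<Longrightarrow> dia l k (a # A) (b # B)
     = dia_step l k (a * b) (dia l k A (1 # B)) (dia l k (1 # A) B) (dia l k A B)"
  by (cases A; cases B) (auto simp: dia_step_def)

lemma dia_step_diff:
  "dia_step l k c (X - X') (Y - Y') (Z - Z') = dia_step l k c X Y Z - dia_step l k c X' Y' Z'"
  unfolding dia_step_def prep_def mulhd_def
  by (simp add: linext_add linext_diff linext_smul smul_diff_right smul_add_right algebra_simps)

lemma dia_step_smul:
  "smul d (dia_step l k c X Y Z) = dia_step l k c (smul d X) (smul d Y) (smul d Z)"
  unfolding dia_step_def prep_def mulhd_def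
  by (simp add: linext_add linext_smul smul_add_right smul_smul mult.commute)

lemma dia_step_tens_rel:
  "comm_kalg sc \<Longrightarrow> X \<in> tens_rel sc \<Longrightarrow> Y \<in> tens_rel sc \<Longrightarrow> Z \<in> tens_rel sc
    \<Longrightarrow> dia_step l k c X Y Z \<in> tens_rel sc"
  unfolding dia_step_def by (intro tens_rel.add tens_rel.scal prep_tens_rel mulhd_tens_rel)

lemma mulhd_dia_step: "mulhd a (dia_step l k b X Y Z) = dia_step l k (a * b) X Y Z"
  unfolding dia_step_def mulhd_def[of a]
  by (simp add: linext_add linext_smul flip: mulhd_def) (simp add: mulhd_prep mulhd_mulhd)

lemma dia_Cons_left: "dia l k (a # A) v = mulhd a (dia l k (1 # A) v)"
proof (cases "A = [] \<or> v = []")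
  case True
  then show ?thesis by (cases v) (auto simp: neq_Nil_conv mulhd_def)
next
  case False
  then obtain b B where "v = b # B" "A \<noteq> []" by (auto simp: neq_Nil_conv)
  then show ?thesis by (cases B) (simp_all add: dia_Cons_Cons mulhd_dia_step)
qed

lemma dia_head_add:
  "dia l k ((x + y) # q) v - dia l k (x # q) v - dia l k (y # q) v \<in> tens_rel sc"
  by (simp only: dia_Cons_left[of l k "x + y" q v] dia_Cons_left[of l k x q v]
      dia_Cons_left[of l k y q v] mulhd_head_add)

lemma dia_add_slot:
  assumes kalg: "comm_kalg sc"
  shows "dia l k (p @ (x + y) # q) v - dia l k (p @ x # q) v - dia l k (p @ y # q) v \<in> tens_rel sc"
proof (induction l k "p @ (x + y) # q" v arbitrary: p rule: dia.induct)
  case (1 l k v)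
  then show ?case by simp
next
  case (2 l k u)
  then show ?case by (simp add: tens_rel.zero)
next
  case (3 l k a b bs)
  then show ?case by (cases p) (auto simp del: dia.simps intro: dia_head_add)
next
  case (4 l k a a1 as b)
  then show ?case
  proof (cases p)
    case Nil
    with "4" show ?thesis by (auto simp del: dia.simps dia_Cons_single intro: dia_head_add)
  next
    case (Cons h p')
    with "4" show ?thesis
      using tens_rel.gen_add[where sc = sc and u = "h * b # p'" and a = x and b = y and v = q] by auto
  qed
next
  case (5 l k a a1 as b b1 bs)
  show ?case
  proof (cases p)
    case Nil
    with "5" show ?thesis by (auto simp del: dia.simps intro: dia_head_add)
  next
    case (Cons h p')
    with "5.hyps" have a: "a = h" and A: "a1 # as = p' @ (x + y) # q" by simp_all
    let ?B = "b1 # bs"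
    let ?X = "\<lambda>z. dia l k (p' @ z # q) (1 # ?B)"
    let ?Y = "\<lambda>z. dia l k (1 # p' @ z # q) ?B"
    let ?Z = "\<lambda>z. dia l k (p' @ z # q) ?B"
    have "dia_step l k (h * b) (?X (x + y) - ?X x - ?X y) (?Y (x + y) - ?Y x - ?Y y)
        (?Z (x + y) - ?Z x - ?Z y) \<in> tens_rel sc"
      using "5.hyps"(1)[OF A] "5.hyps"(2)[of "1 # p'"] "5.hyps"(3)[OF A] A
      by (intro dia_step_tens_rel kalg) simp_all
    then show ?thesis
      using A by (simp add: Cons a dia_Cons_Cons dia_step_diff del: dia.simps)
  qed
qed

lemma dia_head_scale:
  "comm_kalg sc \<Longrightarrow> dia l k (sc c x # q) v - smul c (dia l k (x # q) v) \<in> tens_rel sc"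
  by (simp only: dia_Cons_left[of l k "sc c x" q v] dia_Cons_left[of l k x q v] mulhd_head_scale)

lemma dia_scale_slot:
  assumes kalg: "comm_kalg sc"
  shows "dia l k (p @ sc c x # q) v - smul c (dia l k (p @ x # q) v) \<in> tens_rel sc"
proof (induction l k "p @ sc c x # q" v arbitrary: p rule: dia.induct)
  case (1 l k v)
  then show ?case by simp
next
  case (2 l k u)
  then show ?case by (simp add: tens_rel.zero)
next
  case (3 l k a b bs)
  then show ?case by (cases p) (auto simp del: dia.simps intro: dia_head_scale kalg)
next
  case (4 l k a a1 as b)
  then show ?case
  proof (cases p)
    case Nil
    with "4" show ?thesis by (auto simp del: dia.simps dia_Cons_single intro: dia_head_scale kalg)
  next
    case (Cons h p')
    with "4" show ?thesis
      using tens_rel.gen_sc[where sc = sc and u = "h * b # p'" and c = c and a = x and v = q] by auto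
  qed
next
  case (5 l k a a1 as b b1 bs)
  show ?case
  proof (cases p)
    case Nil
    with "5" show ?thesis by (auto simp del: dia.simps intro: dia_head_scale kalg)
  next
    case (Cons h p')
    with "5.hyps" have a: "a = h" and A: "a1 # as = p' @ sc c x # q" by simp_all
    let ?B = "b1 # bs"
    let ?X = "\<lambda>z. dia l k (p' @ z # q) (1 # ?B)"
    let ?Y = "\<lambda>z. dia l k (1 # p' @ z # q) ?B"
    let ?Z = "\<lambda>z. dia l k (p' @ z # q) ?B"
    have "dia_step l k (h * b) (?X (sc c x) - smul c (?X x)) (?Y (sc c x) - smul c (?Y x))
        (?Z (sc c x) - smul c (?Z x)) \<in> tens_rel sc"
      using "5.hyps"(1)[OF A] "5.hyps"(2)[of "1 # p'"] "5.hyps"(3)[OF A] A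
      by (intro dia_step_tens_rel kalg) simp_all
    then show ?thesis
      using A by (simp add: Cons a dia_Cons_Cons dia_step_diff dia_step_smul del: dia.simps)
  qed
qed

lemma dmd_tens_rel_left:
  assumes kalg: "comm_kalg sc" and r: "r \<in> tens_rel sc"
  shows "dmd l k r y \<in> tens_rel sc"
  unfolding dmd_def
proof (rule linext_tens_rel[OF _ r], unfold respects_tens_rel_def, intro conjI allI)
  fix u a b v
  show "linext (dia l k (u @ (a + b) # v)) y - linext (dia l k (u @ a # v)) y
      - linext (dia l k (u @ b # v)) y \<in> tens_rel sc"
    unfolding linext_diff_fun[symmetric] by (intro linext_in_tens_rel dia_add_slot kalg)
next
  fix u c a v
  show "linext (dia l k (u @ sc c a # v)) y - smul c (linext (dia l k (u @ a # v)) y) \<in> tens_rel sc"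
    unfolding linext_smul_fun[symmetric] linext_diff_fun[symmetric]
    by (intro linext_in_tens_rel dia_scale_slot kalg)
qed

lemma dmd_diff_left: "dmd l k (x - x') y = dmd l k x y - dmd l k x' y"
  unfolding dmd_def by (rule linext_diff)

lemma dmd_wd_single: "dmd l k (wd [a]) y = mulhd a y"
proof -
  have "dia l k [a] = (\<lambda>w. case w of [] \<Rightarrow> 0 | b # bs \<Rightarrow> wd (a * b # bs))"
    by (auto split: list.split)
  then show ?thesis unfolding dmd_def mulhd_def by simp
qed

lemma lookup_dia_Nil [simp]: "Poly_Mapping.lookup (dia l k u v) [] = 0"
  by (induction l k u v rule: dia.induct) (auto simp: lookup_add lookup_wd)

lemma lookup_dmd_Nil [simp]: "Poly_Mapping.lookup (dmd l k x y) [] = 0"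
  unfolding dmd_def lookup_linext by simp

section \<open>The counit on words\<close>

locale alg_character =
  fixes sc :: "'k::comm_ring_1 \<Rightarrow> 'a::comm_ring_1 \<Rightarrow> 'a" and e :: "'a \<Rightarrow> 'k"
  assumes hom_add: "e (a + b) = e a + e b"
    and hom_scale: "e (sc c a) = c * e a"
    and hom_mult: "e (a * b) = e a * e b"
    and hom_one: "e 1 = 1"

lemma comm_bialgebra_alg_character: "comm_bialgebra sc \<Delta> e \<Longrightarrow> alg_character sc e"
  unfolding comm_bialgebra_def alg_character_def by blast

definition counit_word :: "('a \<Rightarrow> 'k::comm_ring_1) \<Rightarrow> 'k \<Rightarrow> 'a list \<Rightarrow> 'k" where
  "counit_word e m w = (case w of [] \<Rightarrow> 0 | a # v \<Rightarrow> e a * prod_list (map e v) * (- m) ^ length v)"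

lemma counit_word_Nil [simp]: "counit_word e m [] = 0"
  by (simp add: counit_word_def)

lemma counit_word_single [simp]: "counit_word e m [a] = e a"
  by (simp add: counit_word_def)

lemma counit_word_Cons_Cons: "w \<noteq> [] \<Longrightarrow> counit_word e m (a # w) = - m * e a * counit_word e m w"
  by (cases w) (simp_all add: counit_word_def algebra_simps)

lemma counit_word_slot:
  "counit_word e m (u @ x # v)
     = e x * (prod_list (map e u) * prod_list (map e v) * (- m) ^ (length u + length v))"
  by (cases u) (simp_all add: counit_word_def algebra_simps power_add)

lemma linform_counit_prep:
  assumes "Poly_Mapping.lookup z [] = 0"
  shows "linform (counit_word e m) (prep c z) = - m * e c * linform (counit_word e m) z"
proof -
  have "linform (counit_word e m) (prep c z) = linform (\<lambda>w. - m * e c * counit_word e m w) z"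
    unfolding prep_def linform_linext
  proof (rule linform_cong)
    fix w assume "w \<in> Poly_Mapping.keys z"
    with assms have "w \<noteq> []" by (auto simp: in_keys_iff)
    then show "linform (counit_word e m) (wd (c # w)) = - m * e c * counit_word e m w"
      by (simp add: counit_word_Cons_Cons)
  qed
  also have "\<dots> = - m * e c * linform (counit_word e m) z"
    by (rule linform_mult_left)
  finally show ?thesis .
qed

context alg_character
begin

lemma counit_word_add_slot:
  "counit_word e m (u @ (a + b) # v) = counit_word e m (u @ a # v) + counit_word e m (u @ b # v)"
  unfolding counit_word_slot hom_add by (simp add: algebra_simps)

lemma counit_word_scale_slot: "counit_word e m (u @ sc c a # v) = c * counit_word e m (u @ a # v)"
  unfolding counit_word_slot hom_scale by (simp add: algebra_simps)

lemma linform_counit_tens_rel: "r \<in> tens_rel sc \<Longrightarrow> linform (counit_word e m) r = 0"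
  by (rule linform_tens_rel[OF counit_word_add_slot counit_word_scale_slot])

lemma linform_counit_mulhd:
  "linform (counit_word e m) (mulhd c z) = e c * linform (counit_word e m) z"
proof -
  have "linform (counit_word e m) (mulhd c z) = linform (\<lambda>w. e c * counit_word e m w) z"
    unfolding mulhd_def linform_linext
    by (rule linform_cong) (auto split: list.split simp: counit_word_def hom_mult)
  then show ?thesis by (simp add: linform_mult_left)
qed

lemma linform_counit_dia_step:
  assumes "Poly_Mapping.lookup X [] = 0" "Poly_Mapping.lookup Y [] = 0" "Poly_Mapping.lookup Z [] = 0"
  shows "linform (counit_word e m) (dia_step l k c X Y Z)
    = - m * e c * (linform (counit_word e m) X + linform (counit_word e m) Y
                   + l * linform (counit_word e m) Z)
      + k * e c * linform (counit_word e m) Z"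
  unfolding dia_step_def using assms
  by (simp add: linform_add linform_smul linform_counit_prep linform_counit_mulhd lookup_add)

lemma linform_counit_dia:
  assumes "m\<^sup>2 - l * m + k = 0" and "u \<noteq> []" and "v \<noteq> []"
  shows "linform (counit_word e m) (dia l k u v) = counit_word e m u * counit_word e m v"
  using assms
proof (induction l k u v rule: dia.induct)
  case (5 l k a a1 as b b1 bs)
  let ?A = "a1 # as" and ?B = "b1 # bs" and ?c = "counit_word e m"
  from "5.prems"(1) have k: "k = l * m - m\<^sup>2"
    by (simp add: eq_diff_eq add.commute add_eq_0_iff2 algebra_simps)
  have ones: "?c (1 # ?A) = - m * ?c ?A" "?c (1 # ?B) = - m * ?c ?B"
    by (simp_all add: counit_word_Cons_Cons hom_one)
  have "linform ?c (dia l k (a # ?A) (b # ?B))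
      = - m * e (a * b) * (?c ?A * ?c (1 # ?B) + ?c (1 # ?A) * ?c ?B + l * (?c ?A * ?c ?B))
        + k * e (a * b) * (?c ?A * ?c ?B)"
    using "5.IH" "5.prems"(1) by (simp add: dia_Cons_Cons linform_counit_dia_step del: dia.simps)
  also have "\<dots> = (- m * e a * ?c ?A) * (- m * e b * ?c ?B)"
    unfolding ones hom_mult k by (simp add: power2_eq_square algebra_simps)
  finally show ?case by (simp add: counit_word_Cons_Cons)
qed (simp_all add: counit_word_def hom_mult algebra_simps)

lemma linform_counit_dmd:
  assumes root: "m\<^sup>2 - l * m + k = 0"
    and x: "Poly_Mapping.lookup x [] = 0" and y: "Poly_Mapping.lookup y [] = 0"
  shows "linform (counit_word e m) (dmd l k x y) = linform (counit_word e m) x * linform (counit_word e m) y"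
proof -
  let ?c = "counit_word e m"
  have "linform ?c (dmd l k x y) = linform (\<lambda>u. linform (\<lambda>v. linform ?c (dia l k u v)) y) x"
    unfolding dmd_def linform_linext ..
  also have "\<dots> = linform (\<lambda>u. ?c u * linform ?c y) x"
  proof (rule linform_cong)
    fix u assume "u \<in> Poly_Mapping.keys x"
    with x have u: "u \<noteq> []" by (auto simp: in_keys_iff)
    have "linform (\<lambda>v. linform ?c (dia l k u v)) y = linform (\<lambda>v. ?c u * ?c v) y"
      by (rule linform_cong) (use y in \<open>auto simp: in_keys_iff intro: linform_counit_dia[OF root u]\<close>)
    also have "\<dots> = ?c u * linform ?c y"
      by (rule linform_mult_left)
    finally show "linform (\<lambda>v. linform ?c (dia l k u v)) y = ?c u * linform ?c y" .
  qed
  also have "\<dots> = linform ?c x * linform ?c y"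
    by (rule linform_mult_right)
  finally show ?thesis .
qed

end

section \<open>The counit of \<open>Sha\<^sub>e(A)\<close>\<close>

lemma cls_eq_iff: "cls sc x = cls sc y \<longleftrightarrow> x - y \<in> tens_rel sc"
proof
  assume "cls sc x = cls sc y"
  moreover have "x \<in> cls sc x" by (simp add: cls_def tens_rel.zero)
  ultimately show "x - y \<in> tens_rel sc" by (simp add: cls_def)
next
  assume "x - y \<in> tens_rel sc"
  then have "z - x \<in> tens_rel sc \<longleftrightarrow> z - y \<in> tens_rel sc" for z
    using tens_rel.add[of "z - x" sc "x - y"] tens_rel_diff[of "z - y" sc "x - y"] by auto
  then show "cls sc x = cls sc y" by (simp add: cls_def)
qed

lemma rep_cls: "rep (cls sc x) - x \<in> tens_rel sc"
proof -
  have "x \<in> cls sc x" by (simp add: cls_def tens_rel.zero)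
  then have "rep (cls sc x) \<in> cls sc x" unfolding rep_def by (rule someI)
  then show ?thesis by (simp add: cls_def)
qed

lemma mem_Sha_iff: "X \<in> Sha sc \<longleftrightarrow> (\<exists>x. Poly_Mapping.lookup x [] = 0 \<and> X = cls sc x)"
  unfolding Sha_def by (auto simp: in_keys_iff)

lemma cls_in_Sha: "Poly_Mapping.lookup x [] = 0 \<Longrightarrow> cls sc x \<in> Sha sc"
  by (auto simp: mem_Sha_iff)

lemma lookup_rep_Nil:
  assumes "X \<in> Sha sc"
  shows "Poly_Mapping.lookup (rep X) [] = 0"
proof -
  from assms obtain x where x: "Poly_Mapping.lookup x [] = 0" "X = cls sc x"
    by (auto simp: mem_Sha_iff)
  have "Poly_Mapping.lookup (rep X - x) [] = 0"
    unfolding x(2) by (rule lookup_Nil_tens_rel[OF rep_cls])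
  with x(1) show ?thesis by (simp add: lookup_minus)
qed

lemma Sha_add_cls: "Sha_add sc (cls sc x) (cls sc y) = cls sc (x + y)"
  unfolding Sha_add_def cls_eq_iff
  using tens_rel.add[OF rep_cls[of sc x] rep_cls[of sc y]] by (simp add: algebra_simps)

lemma Sha_smul_cls: "Sha_smul sc c (cls sc x) = cls sc (smul c x)"
  unfolding Sha_smul_def cls_eq_iff
  using tens_rel.scal[OF rep_cls[of sc x], of c] by (simp add: smul_diff_right)

lemma Sha_P_cls: "Sha_P sc (cls sc x) = cls sc (prep 1 x)"
  unfolding Sha_P_def cls_eq_iff
  using prep_tens_rel[OF rep_cls[of sc x], of 1] by (simp add: prep_def linext_diff)

lemma Sha_mul_j_cls:
  assumes kalg: "comm_kalg sc"
  shows "Sha_mul sc l k (Sha_j sc a) (cls sc y) = cls sc (mulhd a y)"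
proof -
  let ?x = "rep (cls sc (wd [a]))" and ?y = "rep (cls sc y)"
  have "dmd l k ?x ?y - mulhd a y = dmd l k (?x - wd [a]) ?y + mulhd a (?y - y)"
    by (simp add: dmd_diff_left dmd_wd_single mulhd_diff)
  also have "\<dots> \<in> tens_rel sc"
    by (intro tens_rel.add dmd_tens_rel_left mulhd_tens_rel rep_cls kalg)
  finally show ?thesis unfolding Sha_mul_def Sha_j_def cls_eq_iff .
qed

lemma cls_wd_Cons:
  "comm_kalg sc \<Longrightarrow> cls sc (wd (a # w)) = Sha_mul sc l k (Sha_j sc a) (Sha_P sc (cls sc (wd w)))"
  by (simp add: Sha_P_cls Sha_mul_j_cls)

lemma Sha_linear_eq_linform:
  fixes g :: "('a::comm_ring_1,'k::comm_ring_1) fmod set \<Rightarrow> 'k"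
  assumes add: "\<And>X Y. X \<in> Sha sc \<Longrightarrow> Y \<in> Sha sc \<Longrightarrow> g (Sha_add sc X Y) = g X + g Y"
    and scale: "\<And>c X. X \<in> Sha sc \<Longrightarrow> g (Sha_smul sc c X) = c * g X"
    and words: "\<And>w. w \<noteq> [] \<Longrightarrow> g (cls sc (wd w)) = h w"
    and x: "Poly_Mapping.lookup x [] = 0"
  shows "g (cls sc x) = linform h x"
proof -
  have "g (cls sc (\<Sum>w\<in>K. smul (c w) (wd w))) = (\<Sum>w\<in>K. c w * h w)"
    if "finite K" "[] \<notin> K" for K and c :: "'a list \<Rightarrow> 'k"
    using that
  proof (induction K rule: finite_induct)
    case empty
    have "cls sc 0 = Sha_smul sc 0 (cls sc 0)"
      by (simp add: Sha_smul_cls)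
    then show ?case using scale[of "cls sc 0" 0] by (simp add: cls_in_Sha)
  next
    case (insert w K)
    let ?s = "\<Sum>w\<in>K. smul (c w) (wd w)"
    have s: "Poly_Mapping.lookup ?s [] = 0" and w: "w \<noteq> []"
      using insert by (auto simp: lookup_sum lookup_wd intro!: sum.neutral)
    have smul_w: "Sha_smul sc (c w) (cls sc (wd w)) \<in> Sha sc"
      using w by (simp add: Sha_smul_cls cls_in_Sha lookup_wd)
    have "g (cls sc (\<Sum>w\<in>insert w K. smul (c w) (wd w)))
        = g (Sha_add sc (Sha_smul sc (c w) (cls sc (wd w))) (cls sc ?s))"
      using insert.hyps by (simp add: Sha_add_cls Sha_smul_cls)
    also have "\<dots> = c w * h w + (\<Sum>w\<in>K. c w * h w)"
      using insert.prems
      by (simp add: add[OF smul_w cls_in_Sha[OF s]] scale cls_in_Sha lookup_wd w words insert.IH)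
    finally show ?case
      using insert.hyps by simp
  qed
  from this[of "Poly_Mapping.keys x" "Poly_Mapping.lookup x"] x show ?thesis
    by (simp add: linform_def in_keys_iff flip: fmod_expansion)
qed

definition counit_Sha ::
  "('k::comm_ring_1 \<Rightarrow> 'a::comm_ring_1 \<Rightarrow> 'a) \<Rightarrow> ('a \<Rightarrow> 'k) \<Rightarrow> 'k \<Rightarrow> ('a,'k) fmod set \<Rightarrow> 'k"
  where "counit_Sha sc e m = (\<lambda>X\<in>Sha sc. linform (counit_word e m) (rep X))"

lemma counit_Sha_apply: "X \<in> Sha sc \<Longrightarrow> counit_Sha sc e m X = linform (counit_word e m) (rep X)"
  by (simp add: counit_Sha_def)

context alg_character
begin

lemma counit_Sha_cls:
  assumes "Poly_Mapping.lookup x [] = 0"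
  shows "counit_Sha sc e m (cls sc x) = linform (counit_word e m) x"
proof -
  have "linform (counit_word e m) (rep (cls sc x) - x) = 0"
    by (rule linform_counit_tens_rel[OF rep_cls])
  then show ?thesis
    by (simp add: counit_Sha_apply cls_in_Sha assms linform_diff)
qed

lemma counit_Sha_j: "counit_Sha sc e m (Sha_j sc a) = e a"
  unfolding Sha_j_def by (simp add: counit_Sha_cls lookup_wd)

lemma Sha_ERB_hom_counit_Sha:
  assumes root: "m\<^sup>2 - l * m + k = 0"
  shows "Sha_ERB_hom sc l k (\<lambda>t. - m * t) (counit_Sha sc e m)"
  unfolding Sha_ERB_hom_def
proof (intro conjI ballI allI)
  show "counit_Sha sc e m \<in> extensional (Sha sc)"
    by (simp add: counit_Sha_def)
  show "counit_Sha sc e m (Sha_j sc 1) = 1"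
    by (simp add: counit_Sha_j hom_one)
next
  fix X Y assume X: "X \<in> Sha sc" and Y: "Y \<in> Sha sc"
  note rep = lookup_rep_Nil[OF X] lookup_rep_Nil[OF Y]
  show "counit_Sha sc e m (Sha_add sc X Y) = counit_Sha sc e m X + counit_Sha sc e m Y"
    unfolding Sha_add_def using rep
    by (simp add: counit_Sha_cls lookup_add linform_add counit_Sha_apply X Y)
  show "counit_Sha sc e m (Sha_mul sc l k X Y) = counit_Sha sc e m X * counit_Sha sc e m Y"
    unfolding Sha_mul_def using rep
    by (simp add: counit_Sha_cls linform_counit_dmd[OF root] counit_Sha_apply X Y)
next
  fix c X assume X: "X \<in> Sha sc"
  show "counit_Sha sc e m (Sha_smul sc c X) = c * counit_Sha sc e m X"
    unfolding Sha_smul_def using lookup_rep_Nil[OF X]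
    by (simp add: counit_Sha_cls linform_smul counit_Sha_apply X)
next
  fix X assume X: "X \<in> Sha sc"
  show "counit_Sha sc e m (Sha_P sc X) = - m * counit_Sha sc e m X"
    unfolding Sha_P_def using lookup_rep_Nil[OF X]
    by (simp add: counit_Sha_cls linform_counit_prep hom_one counit_Sha_apply X)
qed

lemma Sha_ERB_hom_eq_counit_Sha:
  assumes kalg: "comm_kalg sc"
    and hom: "Sha_ERB_hom sc l k (\<lambda>t. - m * t) g"
    and j: "\<And>a. g (Sha_j sc a) = e a"
  shows "g = counit_Sha sc e m"
proof
  fix X
  from hom have ext: "g \<in> extensional (Sha sc)"
    and add: "\<And>X Y. X \<in> Sha sc \<Longrightarrow> Y \<in> Sha sc \<Longrightarrow> g (Sha_add sc X Y) = g X + g Y"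
    and scale: "\<And>c X. X \<in> Sha sc \<Longrightarrow> g (Sha_smul sc c X) = c * g X"
    and mul: "\<And>X Y. X \<in> Sha sc \<Longrightarrow> Y \<in> Sha sc \<Longrightarrow> g (Sha_mul sc l k X Y) = g X * g Y"
    and P: "\<And>X. X \<in> Sha sc \<Longrightarrow> g (Sha_P sc X) = - m * g X"
    unfolding Sha_ERB_hom_def by auto
  have words: "g (cls sc (wd (a # w))) = counit_word e m (a # w)" for a w
  proof (induction w arbitrary: a)
    case Nil
    show ?case using j[of a] by (simp add: Sha_j_def)
  next
    case (Cons b w)
    have "g (cls sc (wd (a # b # w))) = g (Sha_j sc a) * g (Sha_P sc (cls sc (wd (b # w))))"
      unfolding cls_wd_Cons[OF kalg, of a "b # w" l k]
      by (intro mul) (simp_all add: Sha_j_def Sha_P_cls cls_in_Sha lookup_wd)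
    also have "\<dots> = e a * (- m * counit_word e m (b # w))"
      by (simp add: j P cls_in_Sha lookup_wd Cons.IH)
    finally show ?case by (simp add: counit_word_Cons_Cons)
  qed
  show "g X = counit_Sha sc e m X"
  proof (cases "X \<in> Sha sc")
    case True
    then obtain x where x: "Poly_Mapping.lookup x [] = 0" "X = cls sc x"
      by (auto simp: mem_Sha_iff)
    have "g (cls sc x) = linform (counit_word e m) x"
      by (rule Sha_linear_eq_linform[OF add scale _ x(1)]) (auto simp: neq_Nil_conv words)
    with x show ?thesis by (simp add: counit_Sha_cls)
  next
    case False
    with ext show ?thesis by (simp add: counit_Sha_def extensional_def)
  qed
qed

end

theorem lemma4p2:
  fixes sc :: "'k::comm_ring_1 \<Rightarrow> 'a::comm_ring_1 \<Rightarrow> 'a"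
    and \<Delta> :: "'a \<Rightarrow> ('a,'k) fmod"
    and epsA :: "'a \<Rightarrow> 'k"
    and l k \<mu> :: 'k
  assumes "comm_bialgebra sc \<Delta> epsA"
    and "\<mu>^2 - l * \<mu> + k = 0"
  shows "\<exists>!f. Sha_ERB_hom sc l k (\<lambda>t. - \<mu> * t) f
              \<and> (\<forall>a. f (Sha_j sc a) = epsA a)
              \<and> (\<forall>X\<in>Sha sc. f (Sha_P sc X) = - \<mu> * f X)"
proof -
  interpret alg_character sc epsA
    using assms(1) by (rule comm_bialgebra_alg_character)
  have kalg: "comm_kalg sc"
    using assms(1) by (simp add: comm_bialgebra_def)
  have hom: "Sha_ERB_hom sc l k (\<lambda>t. - \<mu> * t) (counit_Sha sc epsA \<mu>)"
    using assms(2) by (rule Sha_ERB_hom_counit_Sha)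
  show ?thesis
    by (rule ex1I[of _ "counit_Sha sc epsA \<mu>"])
      (use hom in \<open>simp add: counit_Sha_j Sha_ERB_hom_def\<close>,
       use Sha_ERB_hom_eq_counit_Sha[OF kalg] in blast)
qed

end
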